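(* Let $C\subseteq\{0,1\}^n$ be a linear code with dual distance $\Gamma$ and $|C|\leq 2^{\frac{1}{64}n}$, let $\epsilon<1/8$, and let $C'\subseteq C$ be nonempty such that $C$ is $C'$-partially testable with $q$ (possibly adaptive) queries for proximity parameter $\epsilon$. If $X\sim U(C')$, then $H[X]\leq\log|C|-\left\lfloor\frac{1}{32}\Gamma/q\right\rfloor$.
   Context: A linear code is an $\mathbb{F}_2$-subspace of $\{0,1\}^n$; its dual distance is the minimum Hamming weight of a nonzero vector of its dual code $C^\perp$. Distance is normalized Hamming distance, $d(x,C)=\min_{c\in C}|\{i:x_i\neq c_i\}|/n$. $C$ is $C'$-partially testable with $q$ adaptive queries if there is a randomized algorithm that, given query access to $x\in\{0,1\}^n$, queries at most $q$ bits of $x$ (each query may depend on the answers to previous queries) and outputs accept/reject, such that every $x\in C'$ is accepted with probability at least $2/3$ and every $x$ with $d(x,C)>\epsilon$ is rejected with probability at least $2/3$. $U(C')$ is the uniform distribution on $C'$; $H$ is Shannon entropy with base-2 logarithms and $\log$ is base 2. *)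

theory Defs
  imports "HOL-Probability.Probability_Mass_Function"
begin

text \<open>Words of length n over F_2 are boolean lists of length n (True = 1).\<close>

definition words :: "nat \<Rightarrow> bool list set" where
  "words n = {x. length x = n}"

definition xor_word :: "bool list \<Rightarrow> bool list \<Rightarrow> bool list" where
  "xor_word x y = map2 (\<noteq>) x y"

text \<open>An F_2-linear code: a subspace of F_2^n (over F_2, a nonempty set closed
  under addition is a subspace).\<close>
definition linear_code :: "nat \<Rightarrow> bool list set \<Rightarrow> bool" where
  "linear_code n C \<longleftrightarrow> C \<subseteq> words n \<and> replicate n False \<in> C \<and>
     (\<forall>x\<in>C. \<forall>y\<in>C. xor_word x y \<in> C)"

definition hamming_weight :: "bool list \<Rightarrow> nat" where
  "hamming_weight x = card {i. i < length x \<and> x ! i}"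

definition hamming :: "bool list \<Rightarrow> bool list \<Rightarrow> nat" where
  "hamming x y = card {i. i < length x \<and> x ! i \<noteq> y ! i}"

definition dual_code :: "nat \<Rightarrow> bool list set \<Rightarrow> bool list set" where
  "dual_code n C = {y \<in> words n. \<forall>c\<in>C. even (card {i. i < n \<and> y ! i \<and> c ! i})}"

definition is_dual_distance :: "nat \<Rightarrow> bool list set \<Rightarrow> nat \<Rightarrow> bool" where
  "is_dual_distance n C \<Gamma> \<longleftrightarrow>
     (\<exists>y\<in>dual_code n C. y \<noteq> replicate n False \<and> hamming_weight y = \<Gamma>) \<and>
     (\<forall>y\<in>dual_code n C. y \<noteq> replicate n False \<longrightarrow> \<Gamma> \<le> hamming_weight y)"

definition rel_dist :: "nat \<Rightarrow> bool list \<Rightarrow> bool list set \<Rightarrow> real" where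
  "rel_dist n x C = real (Min ((\<lambda>c. hamming x c) ` C)) / real n"

text \<open>Deterministic adaptive query algorithms = decision trees: query position i,
  continue in the left subtree if x_i = 1, in the right one if x_i = 0.\<close>
datatype dtree = Leaf bool | Query nat dtree dtree

fun run :: "dtree \<Rightarrow> bool list \<Rightarrow> bool" where
  "run (Leaf b) x = b"
| "run (Query i t1 t0) x = (if x ! i then run t1 x else run t0 x)"

fun depth :: "dtree \<Rightarrow> nat" where
  "depth (Leaf b) = 0"
| "depth (Query i t1 t0) = Suc (max (depth t1) (depth t0))"

fun queries_in :: "nat \<Rightarrow> dtree \<Rightarrow> bool" where
  "queries_in n (Leaf b) = True"
| "queries_in n (Query i t1 t0) = (i < n \<and> queries_in n t1 \<and> queries_in n t0)"

text \<open>A randomized adaptive algorithm making at most q queries is a probability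
  distribution over decision trees of depth at most q (random coins fixed up front).\<close>
definition partially_testable ::
  "nat \<Rightarrow> bool list set \<Rightarrow> bool list set \<Rightarrow> nat \<Rightarrow> real \<Rightarrow> bool" where
  "partially_testable n C C' q \<epsilon> \<longleftrightarrow>
     (\<exists>T :: dtree pmf.
        (\<forall>t\<in>set_pmf T. depth t \<le> q \<and> queries_in n t) \<and>
        (\<forall>x\<in>C'. measure_pmf.prob T {t. run t x} \<ge> 2/3) \<and>
        (\<forall>x\<in>words n. rel_dist n x C > \<epsilon> \<longrightarrow>
            measure_pmf.prob T {t. \<not> run t x} \<ge> 2/3))"

definition shannon_entropy :: "'a pmf \<Rightarrow> real" where
  "shannon_entropy p = - (\<Sum>x\<in>set_pmf p. pmf p x * log 2 (pmf p x))"

end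

theory Submission
  imports Defs
begin

text \<open>Amplify the tester by running \<open>t + 1\<close> independent copies and accepting iff all of them
  accept: this is a distribution over decision trees of depth \<open>(t + 1) q < \<Gamma>\<close>.  Since the dual
  distance is \<open>\<Gamma>\<close>, a uniform codeword is \<open>(\<Gamma> - 1)\<close>-wise uniform (all nontrivial characters on
  fewer than \<open>\<Gamma>\<close> coordinates sum to zero over \<open>C\<close>), so each such tree accepts a uniform codeword
  and a uniform word with the same probability.  The amplified tester accepts each word of
  \<open>C'\<close> with probability at least \<open>(2/3)^(t+1)\<close>, while a uniform word is accepted with
  probability at most \<open>(1/3)^(t+1)\<close> plus the probability \<open>\<le> 3^-(t+1)\<close> of being \<open>\<epsilon>\<close>-close to the
  small code \<open>C\<close>.  Comparing the two averages gives \<open>|C'| 2^t \<le> |C|\<close>, and the entropy of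
  \<open>U(C')\<close> is \<open>log |C'|\<close>.\<close>

lemma nth_xor_word:
  "length x = length y \<Longrightarrow> i < length x \<Longrightarrow> xor_word x y ! i = (x ! i \<noteq> y ! i)"
  by (simp add: xor_word_def)

lemma length_xor_word: "length (xor_word x y) = min (length x) (length y)"
  by (simp add: xor_word_def)

lemma xor_word_cancel: "length x = length y \<Longrightarrow> xor_word (xor_word x y) y = x"
  by (rule nth_equalityI) (auto simp: nth_xor_word length_xor_word)

lemma words_eq_lists: "words n = {xs. set xs \<subseteq> UNIV \<and> length xs = n}"
  by (auto simp: words_def)

lemma finite_words: "finite (words n)"
  unfolding words_eq_lists by (rule finite_lists_length_eq) simp

lemma card_words: "card (words n) = 2 ^ n"
  unfolding words_eq_lists by (subst card_lists_length_eq) simp_all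

lemma words_Suc: "words (Suc m) = (\<lambda>(b, x). b # x) ` (UNIV \<times> words m)"
proof
  show "words (Suc m) \<subseteq> (\<lambda>(b, x). b # x) ` (UNIV \<times> words m)"
  proof
    fix x assume "x \<in> words (Suc m)"
    then obtain b y where "x = b # y" "length y = m" by (cases x) (auto simp: words_def)
    then show "x \<in> (\<lambda>(b, x). b # x) ` (UNIV \<times> words m)"
      by (intro image_eqI[of _ _ "(b, y)"]) (auto simp: words_def)
  qed
qed (auto simp: words_def)

lemma real_card_filter: "finite A \<Longrightarrow> real (card {a\<in>A. P a}) = (\<Sum>a\<in>A. of_bool (P a))"
  by (simp add: Int_def)

section \<open>Characters of \<open>F\<^sub>2\<^sup>n\<close>\<close>

definition chi :: "nat set \<Rightarrow> bool list \<Rightarrow> real" where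
  "chi S x = (\<Prod>i\<in>S. if x ! i then -1 else 1)"

lemma chi_xor_word:
  assumes "length x = length y" "S \<subseteq> {..<length x}"
  shows "chi S (xor_word x y) = chi S x * chi S y"
  unfolding chi_def prod.distrib[symmetric]
  by (rule prod.cong) (use assms in \<open>auto simp: nth_xor_word\<close>)

lemma chi_eq_power_card:
  assumes "finite S"
  shows "chi S x = (-1) ^ card {i\<in>S. x ! i}"
proof -
  have "chi S x = (\<Prod>i\<in>S \<inter> {i. x!i}. -1) * (\<Prod>i\<in>S \<inter> - {i. x!i}. 1)"
    unfolding chi_def by (rule prod.If_cases[OF assms])
  also have "S \<inter> {i. x!i} = {i\<in>S. x ! i}" by auto
  finally show ?thesis by simp
qed

lemma sum_Pow_chi_mult_chi:
  assumes "finite D" "D \<subseteq> {..<n}" "length x = n" "length z = n"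
  shows "(\<Sum>S\<in>Pow D. chi S x * chi S z) = (if \<forall>i\<in>D. x!i = z!i then 2 ^ card D else 0)"
proof -
  define s where "s i = (if x!i \<noteq> z!i then -1 else (1::real))" for i
  have "(\<Sum>S\<in>Pow D. chi S x * chi S z) = (\<Sum>S\<in>Pow D. (\<Prod>i\<in>S. s i) * (\<Prod>i\<in>D-S. 1))"
    unfolding chi_def prod.distrib[symmetric] s_def
    by (rule sum.cong[OF refl], simp, rule prod.cong[OF refl]) auto
  also have "\<dots> = (\<Prod>i\<in>D. s i + 1)" by (rule prod_add[symmetric, OF assms(1)])
  also have "\<dots> = (if \<forall>i\<in>D. x!i = z!i then 2 ^ card D else 0)"
    using assms(1) by (auto simp: s_def intro: prod_zero)
  finally show ?thesis .
qed

text \<open>Translating by a word on which \<open>chi S\<close> is \<open>-1\<close> permutes \<open>W\<close> and negates \<open>chi S\<close>.\<close>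
lemma sum_chi_eq_0_if_translation_invariant:
  assumes "finite W" "\<And>c. c \<in> W \<Longrightarrow> xor_word c c0 \<in> W \<and> length c = length c0"
    and "S \<subseteq> {..<length c0}" "chi S c0 = -1"
  shows "(\<Sum>c\<in>W. chi S c) = 0"
proof -
  have "(\<Sum>c\<in>W. chi S c) = (\<Sum>c\<in>W. chi S (xor_word c c0))"
    by (rule sum.reindex_bij_witness[where i="\<lambda>c. xor_word c c0" and j="\<lambda>c. xor_word c c0"])
       (auto simp: assms xor_word_cancel)
  also have "\<dots> = - (\<Sum>c\<in>W. chi S c)"
    using assms by (simp add: chi_xor_word sum_negf)
  finally show ?thesis by simp
qed

section \<open>\<open>k\<close>-wise uniform sets of words\<close>

definition agree :: "nat set \<Rightarrow> bool list \<Rightarrow> bool list \<Rightarrow> bool" where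
  "agree D z c \<longleftrightarrow> (\<forall>i\<in>D. c!i = z!i)"

definition k_wise_uniform :: "nat \<Rightarrow> nat \<Rightarrow> bool list set \<Rightarrow> bool" where
  "k_wise_uniform n k W \<longleftrightarrow>
     (\<forall>D z. D \<subseteq> {..<n} \<longrightarrow> card D \<le> k \<longrightarrow> length z = n \<longrightarrow>
        real (card {c\<in>W. agree D z c}) * 2 ^ card D = real (card W))"

lemma k_wise_uniform_if_sum_chi_eq_0:
  assumes W: "finite W" "W \<subseteq> words n"
    and chi: "\<And>S. S \<subseteq> {..<n} \<Longrightarrow> S \<noteq> {} \<Longrightarrow> card S \<le> k \<Longrightarrow> (\<Sum>c\<in>W. chi S c) = 0"
  shows "k_wise_uniform n k W"
  unfolding k_wise_uniform_def
proof (intro allI impI)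
  fix D and z :: "bool list" assume D: "D \<subseteq> {..<n}" "card D \<le> k" and z: "length z = n"
  have finD: "finite D" using D(1) finite_subset by blast
  have "real (card {c\<in>W. agree D z c}) * 2 ^ card D
      = (\<Sum>c\<in>W. (if agree D z c then 1 else 0) * 2 ^ card D)"
    by (simp add: real_card_filter[OF W(1)] sum_distrib_right of_bool_def)
  also have "\<dots> = (\<Sum>c\<in>W. \<Sum>S\<in>Pow D. chi S c * chi S z)"
  proof (rule sum.cong[OF refl])
    fix c assume "c \<in> W"
    then have "length c = n" using W(2) by (auto simp: words_def)
    then show "(if agree D z c then 1 else 0) * 2 ^ card D = (\<Sum>S\<in>Pow D. chi S c * chi S z)"
      by (simp add: sum_Pow_chi_mult_chi[OF finD D(1) _ z] agree_def)
  qed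
  also have "\<dots> = (\<Sum>S\<in>Pow D. chi S z * (\<Sum>c\<in>W. chi S c))"
    by (subst sum.swap) (simp add: sum_distrib_left mult.commute)
  also have "\<dots> = (\<Sum>S\<in>Pow D. if S = {} then real (card W) else 0)"
  proof (rule sum.cong[OF refl])
    fix S assume "S \<in> Pow D"
    then have "S \<subseteq> {..<n}" "card S \<le> k"
      using D finD by (auto intro: order.trans card_mono)
    then show "chi S z * (\<Sum>c\<in>W. chi S c) = (if S = {} then real (card W) else 0)"
      using chi by (simp add: chi_def)
  qed
  also have "\<dots> = real (card W)" using finD by simp
  finally show "real (card {c\<in>W. agree D z c}) * 2 ^ card D = real (card W)" .
qed

lemma indicator_word:
  "map (\<lambda>i. i \<in> S) [0..<n] \<in> words n" "i < n \<Longrightarrow> map (\<lambda>i. i \<in> S) [0..<n] ! i = (i \<in> S)"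
  by (auto simp: words_def)

lemma words_k_wise_uniform: "k_wise_uniform n k (words n)"
proof (rule k_wise_uniform_if_sum_chi_eq_0[OF finite_words order.refl])
  fix S assume S: "S \<subseteq> {..<n}" "S \<noteq> {}"
  then obtain i0 where i0: "i0 \<in> S" "i0 < n" by auto
  define c0 where "c0 = map (\<lambda>i. i \<in> {i0}) [0..<n]"
  have c0: "c0 \<in> words n" "i < n \<Longrightarrow> c0 ! i = (i = i0)" for i
    using indicator_word[where S="{i0}" and n=n] i0 by (auto simp: c0_def)
  have "{i\<in>S. c0 ! i} = {i0}" using S(1) i0 c0(2) by auto
  then have "chi S c0 = -1"
    using S(1) finite_subset by (subst chi_eq_power_card) auto
  then show "(\<Sum>c\<in>words n. chi S c) = 0"
    using c0(1) S(1)
    by (intro sum_chi_eq_0_if_translation_invariant[of _ c0] finite_words)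
       (auto simp: words_def length_xor_word)
qed

text \<open>A nonzero word of weight below the dual distance is not in \<open>C\<^sup>\<perp>\<close>, i.e. some codeword has
  odd overlap with it; translation by that codeword kills the corresponding character.\<close>
lemma linear_code_k_wise_uniform:
  assumes lin: "linear_code n C" and dd: "is_dual_distance n C \<Gamma>"
  shows "k_wise_uniform n (\<Gamma> - 1) C"
proof -
  have Cw: "C \<subseteq> words n" using lin by (simp add: linear_code_def)
  show ?thesis
  proof (rule k_wise_uniform_if_sum_chi_eq_0[OF finite_subset[OF Cw finite_words] Cw])
    fix S assume S: "S \<subseteq> {..<n}" "S \<noteq> {}" "card S \<le> \<Gamma> - 1"
    have finS: "finite S" using S(1) finite_subset by blast
    define y where "y = map (\<lambda>i. i \<in> S) [0..<n]"
    note y = indicator_word[where S=S and n=n, folded y_def]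
    have "y \<noteq> replicate n False" using S(1,2) y(2) by (auto simp: words_def)
    moreover have "hamming_weight y = card S"
      using y S(1) by (auto simp: hamming_weight_def words_def intro!: arg_cong[where f=card])
    moreover have "card S > 0" using finS S(2) by (simp add: card_gt_0_iff)
    then have "card S < \<Gamma>" using S(3) by linarith
    ultimately have "y \<notin> dual_code n C" using dd by (auto simp: is_dual_distance_def)
    then obtain c0 where c0: "c0 \<in> C" "odd (card {i. i < n \<and> y ! i \<and> c0 ! i})"
      using y(1) by (auto simp: dual_code_def)
    have "{i. i < n \<and> y ! i \<and> c0 ! i} = {i\<in>S. c0 ! i}" using S(1) y(2) by auto
    with c0 have "chi S c0 = -1" by (simp add: chi_eq_power_card[OF finS])
    then show "(\<Sum>c\<in>C. chi S c) = 0"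
      using lin c0(1) Cw S(1)
      by (intro sum_chi_eq_0_if_translation_invariant[of _ c0] finite_subset[OF Cw finite_words])
         (auto simp: linear_code_def words_def)
  qed
qed

section \<open>Decision trees cannot distinguish \<open>k\<close>-wise uniform sets\<close>

lemma card_agree_insert_run_Query:
  assumes "finite W" "i \<notin> D" "i < length z"
  shows "card {c\<in>W. agree D z c \<and> run (Query i t1 t0) c} =
    card {c\<in>W. agree (insert i D) (z[i:=True]) c \<and> run t1 c} +
    card {c\<in>W. agree (insert i D) (z[i:=False]) c \<and> run t0 c}"
proof -
  have "{c\<in>W. agree D z c \<and> run (Query i t1 t0) c} =
    {c\<in>W. agree (insert i D) (z[i:=True]) c \<and> run t1 c} \<union>
    {c\<in>W. agree (insert i D) (z[i:=False]) c \<and> run t0 c}"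
    "{c\<in>W. agree (insert i D) (z[i:=True]) c \<and> run t1 c} \<inter>
    {c\<in>W. agree (insert i D) (z[i:=False]) c \<and> run t0 c} = {}"
    using assms(2,3) by (auto simp: agree_def nth_list_update)
  then show ?thesis using assms(1) by (simp add: card_Un_disjoint)
qed

text \<open>Induction on the tree, fixing the answers \<open>z\<close> on the already queried positions \<open>D\<close>: at a
  fresh query the set of fixed positions grows by one while the depth drops by one.\<close>
lemma card_agree_run_k_wise_uniform:
  assumes V: "finite V" "k_wise_uniform n k V" and W: "finite W" "k_wise_uniform n k W"
  shows "queries_in n s \<Longrightarrow> D \<subseteq> {..<n} \<Longrightarrow> card D + depth s \<le> k \<Longrightarrow> length z = n \<Longrightarrow>
    real (card {c\<in>V. agree D z c \<and> run s c}) * real (card W) =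
    real (card {c\<in>W. agree D z c \<and> run s c}) * real (card V)"
proof (induction s arbitrary: D z)
  case (Leaf b)
  define A B where "A = real (card {c\<in>V. agree D z c})" and "B = real (card {c\<in>W. agree D z c})"
  have "A * 2 ^ card D = real (card V)" "B * 2 ^ card D = real (card W)"
    using V(2) W(2) Leaf.prems by (auto simp: k_wise_uniform_def A_def B_def)
  then have "A * real (card W) = B * real (card V)"
    by (simp flip: \<open>A * 2 ^ card D = real (card V)\<close> \<open>B * 2 ^ card D = real (card W)\<close>)
  then show ?case by (cases b) (auto simp: A_def B_def)
next
  case (Query i t1 t0)
  show ?case
  proof (cases "i \<in> D")
    case True
    then have "{c\<in>U. agree D z c \<and> run (Query i t1 t0) c} =
        {c\<in>U. agree D z c \<and> run (if z!i then t1 else t0) c}" for U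
      by (auto simp: agree_def)
    then show ?thesis using Query by (cases "z!i") auto
  next
    case False
    have i: "i < length z" using Query.prems by simp
    have D': "insert i D \<subseteq> {..<n}" "card (insert i D) = Suc (card D)"
      using Query.prems False finite_subset[of D "{..<n}"] by auto
    have IH: "real (card {c\<in>V. agree (insert i D) (z[i:=b]) c \<and> run t c}) * real (card W) =
       real (card {c\<in>W. agree (insert i D) (z[i:=b]) c \<and> run t c}) * real (card V)"
      if "t \<in> {t1, t0}" for t b
      using that Query.IH[of "insert i D" "z[i:=b]"] Query.prems D' by auto
    show ?thesis
      unfolding card_agree_insert_run_Query[OF V(1) False i]
        card_agree_insert_run_Query[OF W(1) False i]
      using IH[of t1 True] IH[of t0 False] by (simp add: distrib_right)
  qed
qed

corollary card_run_k_wise_uniform: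
  assumes "finite V" "k_wise_uniform n k V" "finite W" "k_wise_uniform n k W"
    and "queries_in n s" "depth s \<le> k"
  shows "real (card {c\<in>V. run s c}) * real (card W) = real (card {c\<in>W. run s c}) * real (card V)"
  using card_agree_run_k_wise_uniform[OF assms(1-4), of s "{}" "replicate n False"] assms(5,6)
  by (simp add: agree_def)

lemma sum_prob_eq_expectation_card:
  assumes "finite A"
  shows "(\<Sum>a\<in>A. measure_pmf.prob M {s. P s a}) =
    measure_pmf.expectation M (\<lambda>s. real (card {a\<in>A. P s a}))"
proof -
  have "(\<Sum>a\<in>A. measure_pmf.prob M {s. P s a}) =
      (\<Sum>a\<in>A. measure_pmf.expectation M (indicator {s. P s a}))"
    by simp
  also have "\<dots> = measure_pmf.expectation M (\<lambda>s. \<Sum>a\<in>A. indicator {s. P s a} s)"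
    by (rule Bochner_Integration.integral_sum[symmetric]) (simp add: less_top[symmetric])
  also have "\<dots> = measure_pmf.expectation M (\<lambda>s. real (card {a\<in>A. P s a}))"
    by (simp add: real_card_filter[OF assms] indicator_def of_bool_def)
  finally show ?thesis .
qed

lemma sum_accept_prob_k_wise_uniform:
  assumes "finite V" "k_wise_uniform n k V" "finite W" "k_wise_uniform n k W"
    and "\<And>s. s \<in> set_pmf M \<Longrightarrow> queries_in n s \<and> depth s \<le> k"
  shows "(\<Sum>c\<in>V. measure_pmf.prob M {s. run s c}) * real (card W) =
         (\<Sum>c\<in>W. measure_pmf.prob M {s. run s c}) * real (card V)"
proof -
  have "(\<Sum>c\<in>V. measure_pmf.prob M {s. run s c}) * real (card W) =
      measure_pmf.expectation M (\<lambda>s. real (card {c\<in>V. run s c}) * real (card W))"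
    by (simp add: sum_prob_eq_expectation_card[OF assms(1)])
  also have "\<dots> = measure_pmf.expectation M (\<lambda>s. real (card {c\<in>W. run s c}) * real (card V))"
    using card_run_k_wise_uniform[OF assms(1-4)] assms(5)
    by (intro integral_cong_AE) (auto intro!: AE_pmfI)
  also have "\<dots> = (\<Sum>c\<in>W. measure_pmf.prob M {s. run s c}) * real (card V)"
    by (simp add: sum_prob_eq_expectation_card[OF assms(3)])
  finally show ?thesis .
qed

section \<open>Amplification by repetition\<close>

fun and_tree :: "dtree \<Rightarrow> dtree \<Rightarrow> dtree" where
  "and_tree (Leaf b) s = (if b then s else Leaf False)"
| "and_tree (Query i t1 t0) s = Query i (and_tree t1 s) (and_tree t0 s)"

lemma run_and_tree: "run (and_tree t s) x = (run t x \<and> run s x)"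
  by (induction t) auto

lemma depth_and_tree: "depth (and_tree t s) \<le> depth t + depth s"
  by (induction t) auto

lemma queries_in_and_tree: "queries_in n t \<Longrightarrow> queries_in n s \<Longrightarrow> queries_in n (and_tree t s)"
  by (induction t) auto

primrec amplify :: "dtree pmf \<Rightarrow> nat \<Rightarrow> dtree pmf" where
  "amplify T 0 = return_pmf (Leaf True)"
| "amplify T (Suc r) = bind_pmf T (\<lambda>t. map_pmf (and_tree t) (amplify T r))"

lemma set_pmf_amplify:
  assumes "\<And>t. t \<in> set_pmf T \<Longrightarrow> queries_in n t \<and> depth t \<le> q"
  shows "s \<in> set_pmf (amplify T r) \<Longrightarrow> queries_in n s \<and> depth s \<le> r * q"
proof (induction r arbitrary: s)
  case (Suc r)
  then obtain t s' where ts: "t \<in> set_pmf T" "s' \<in> set_pmf (amplify T r)" "s = and_tree t s'"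
    by auto
  have "depth s \<le> depth t + depth s'" using ts(3) depth_and_tree by simp
  also have "\<dots> \<le> q + r * q" using assms ts Suc.IH[OF ts(2)] by (intro add_mono) auto
  finally show ?case using queries_in_and_tree assms ts Suc.IH[OF ts(2)] by auto
qed simp

lemma prob_accept_amplify:
  "measure_pmf.prob (amplify T r) {s. run s x} = measure_pmf.prob T {t. run t x} ^ r"
proof (induction r)
  case (Suc r)
  define p where "p = measure_pmf.prob T {t. run t x}"
  have "ennreal (measure_pmf.prob (amplify T (Suc r)) {s. run s x})
      = (\<integral>\<^sup>+t. emeasure (amplify T r) (and_tree t -` {s. run s x}) \<partial>T)"
    by (simp add: measure_pmf.emeasure_eq_measure[symmetric])
  also have "\<dots> = (\<integral>\<^sup>+t. ennreal (p ^ r) * indicator {t. run t x} t \<partial>T)"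
  proof (rule nn_integral_cong)
    fix t
    have "and_tree t -` {s. run s x} = (if run t x then {s. run s x} else {})"
      by (auto simp: run_and_tree)
    then show "emeasure (amplify T r) (and_tree t -` {s. run s x}) =
        ennreal (p ^ r) * indicator {t. run t x} t"
      using Suc.IH by (simp add: measure_pmf.emeasure_eq_measure p_def)
  qed
  also have "\<dots> = ennreal (p ^ r) * emeasure T {t. run t x}"
    by (simp add: nn_integral_cmult_indicator)
  also have "\<dots> = ennreal (p ^ Suc r)"
    by (simp add: measure_pmf.emeasure_eq_measure p_def ennreal_mult' mult.commute)
  finally show ?case unfolding p_def by simp
qed simp

section \<open>Words close to a small code are rare\<close>

lemma hamming_eq_sum: "hamming x c = (\<Sum>i<length x. if x!i \<noteq> c!i then 1 else 0)"
proof -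
  have "{i. i < length x \<and> x ! i \<noteq> c ! i} = {i\<in>{..<length x}. x!i \<noteq> c!i}" by auto
  moreover have "(\<Sum>i<length x. if x!i \<noteq> c!i then 1 else 0) = card {i\<in>{..<length x}. x!i \<noteq> c!i}"
    by (simp add: sum.inter_filter[symmetric])
  ultimately show ?thesis by (simp add: hamming_def)
qed

lemma hamming_Cons: "hamming (b # x) (d # c) = (if b \<noteq> d then 1 else 0) + hamming x c"
  unfolding hamming_eq_sum by (simp only: length_Cons sum.lessThan_Suc_shift nth_Cons_0 nth_Cons_Suc)

lemma sum_power_hamming_words:
  fixes y :: real
  shows "length c = n \<Longrightarrow> (\<Sum>x\<in>words n. y ^ hamming x c) = (1 + y) ^ n"
proof (induction c arbitrary: n)
  case Nil
  then have "words n = {[]}" by (auto simp: words_def)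
  then show ?case using Nil by (simp add: hamming_def)
next
  case (Cons d c)
  then obtain m where m: "n = Suc m" "length c = m" by auto
  have inj: "inj_on (\<lambda>(b, x). b # x) (UNIV \<times> words m)" by (auto simp: inj_on_def)
  have "(\<Sum>x\<in>words n. y ^ hamming x (d # c)) =
      (\<Sum>(b, x)\<in>UNIV \<times> words m. y ^ hamming (b # x) (d # c))"
    unfolding m(1) words_Suc by (subst sum.reindex[OF inj]) (simp add: case_prod_unfold)
  also have "\<dots> = (\<Sum>b\<in>UNIV. \<Sum>x\<in>words m. y ^ hamming (b # x) (d # c))"
    by (rule sum.cartesian_product[symmetric])
  also have "\<dots> = (\<Sum>b\<in>UNIV. y ^ (if b \<noteq> d then 1 else 0) * (\<Sum>x\<in>words m. y ^ hamming x c))"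
    by (simp add: hamming_Cons power_add sum_distrib_left)
  also have "\<dots> = (1 + y) ^ n"
    using Cons.IH[OF m(2)] m(1) by (cases d) (simp_all add: UNIV_bool algebra_simps)
  finally show ?case .
qed

lemma card_hamming_ball_le:
  assumes "length c = n"
  shows "real (card {x\<in>words n. hamming x c \<le> M}) * 4 ^ n \<le> 5 ^ n * 4 ^ M"
proof -
  let ?B = "{x\<in>words n. hamming x c \<le> M}"
  have "real (card ?B) * (1/4) ^ M = (\<Sum>x\<in>?B. (1/4::real) ^ M)" by simp
  also have "\<dots> \<le> (\<Sum>x\<in>?B. (1/4::real) ^ hamming x c)"
    by (intro sum_mono power_decreasing) auto
  also have "\<dots> \<le> (\<Sum>x\<in>words n. (1/4::real) ^ hamming x c)"
    by (intro sum_mono2 finite_words) auto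
  also have "\<dots> = (5/4) ^ n" using sum_power_hamming_words[OF assms, of "1/4"] by simp
  finally have "real (card ?B) * (1/4) ^ M * (4 ^ M * 4 ^ n) \<le> (5/4) ^ n * (4 ^ M * 4 ^ n)"
    by (intro mult_right_mono) auto
  then show ?thesis by (simp add: field_simps)
qed

lemma card_close_to_code_le:
  assumes C: "finite C" "C \<subseteq> words n" "C \<noteq> {}" and "\<epsilon> < 1/8" "n > 0"
  shows "real (card {x\<in>words n. rel_dist n x C \<le> \<epsilon>}) * 4 ^ n \<le>
    real (card C) * 5 ^ n * 4 ^ (n div 8)"
proof -
  let ?B = "\<lambda>c. {x\<in>words n. hamming x c \<le> n div 8}"
  have "{x\<in>words n. rel_dist n x C \<le> \<epsilon>} \<subseteq> (\<Union>c\<in>C. ?B c)"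
  proof
    fix x assume x: "x \<in> {x\<in>words n. rel_dist n x C \<le> \<epsilon>}"
    have "Min (hamming x ` C) \<in> hamming x ` C" using C by (intro Min_in) auto
    then obtain c where c: "c \<in> C" "hamming x c = Min (hamming x ` C)" by auto
    then have "real (hamming x c) \<le> \<epsilon> * real n"
      using x assms(5) by (simp add: rel_dist_def field_simps)
    also have "\<dots> < real n / 8"
      using mult_strict_right_mono[OF assms(4), of "real n"] assms(5) by simp
    finally have "hamming x c \<le> n div 8" by linarith
    then show "x \<in> (\<Union>c\<in>C. ?B c)" using x c(1) by blast
  qed
  then have "card {x\<in>words n. rel_dist n x C \<le> \<epsilon>} \<le> (\<Sum>c\<in>C. card (?B c))"
    by (intro order.trans[OF card_mono card_UN_le] C(1)) (auto simp: finite_words C(1))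
  then have "real (card {x\<in>words n. rel_dist n x C \<le> \<epsilon>}) * 4 ^ n \<le>
      (\<Sum>c\<in>C. real (card (?B c)) * 4 ^ n)"
    unfolding sum_distrib_right[symmetric] by (intro mult_right_mono) (simp_all flip: of_nat_sum)
  also have "\<dots> \<le> (\<Sum>c\<in>C. 5 ^ n * 4 ^ (n div 8))"
    using C(2) by (intro sum_mono card_hamming_ball_le) (auto simp: words_def)
  finally show ?thesis by simp
qed

text \<open>The estimate \<open>2^(n/64) (5/4)^n 4^(n/8) 3^(n/32+1) \<le> 2^n\<close>, raised to the 64th power to
  turn it into an inequality between natural numbers.\<close>
lemma small_code_volume_arith_nat:
  assumes "32 * t \<le> n" "8 \<le> n"
  shows "2 ^ n * (5 ^ n * 4 ^ (n div 8) * 3 ^ (t + 1)) ^ 64 \<le> ((8::nat) ^ n) ^ 64"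
proof -
  have "(5 ^ n * 4 ^ (n div 8) * 3 ^ (t + 1)) ^ 64 =
      5 ^ (n * 64) * 4 ^ (n div 8 * 64) * 3 ^ (t * 64) * (3::nat) ^ 64"
    by (simp only: power_mult_distrib power_mult power_add power_one_right)
  also have "\<dots> \<le> 5 ^ (n * 64) * 4 ^ (n * 8) * 3 ^ (n * 2) * (2 ^ 16) ^ n"
  proof -
    have "(4::nat) ^ (n div 8 * 64) \<le> 4 ^ (n * 8)" "(3::nat) ^ (t * 64) \<le> 3 ^ (n * 2)"
      using assms(1) by (intro power_increasing; simp)+
    moreover have "(3::nat) ^ 64 \<le> (2 ^ 16) ^ n"
      using power_increasing[OF assms(2), of "2 ^ 16 :: nat"] by simp
    ultimately show ?thesis by (intro mult_mono) auto
  qed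
  also have "\<dots> = (5 ^ 64 * 4 ^ 8 * 3 ^ 2 * 2 ^ 16) ^ n"
    by (simp only: power_mult_distrib power_mult mult.commute[of n])
  finally have "2 ^ n * (5 ^ n * 4 ^ (n div 8) * 3 ^ (t + 1)) ^ 64 \<le>
      (2::nat) ^ n * (5 ^ 64 * 4 ^ 8 * 3 ^ 2 * 2 ^ 16) ^ n"
    by (rule mult_left_mono) simp
  also have "\<dots> = (2 * (5 ^ 64 * 4 ^ 8 * 3 ^ 2 * 2 ^ 16)) ^ n"
    by (simp only: power_mult_distrib)
  also have "\<dots> \<le> ((2::nat) ^ 192) ^ n" by (rule power_mono) simp_all
  also have "\<dots> = (8 ^ 64) ^ n" by simp
  also have "\<dots> = (8 ^ n) ^ 64" by (simp only: power_mult[symmetric] mult.commute)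
  finally show ?thesis .
qed

lemma card_close_to_small_code_le:
  assumes C: "finite C" "C \<subseteq> words n" "C \<noteq> {}" "real (card C) \<le> 2 powr (real n / 64)"
    and "\<epsilon> < 1/8" "32 * t \<le> n" "8 \<le> n"
  shows "real (card {x\<in>words n. rel_dist n x C \<le> \<epsilon>}) * 3 ^ (t + 1) \<le> 2 ^ n"
proof -
  define Z :: nat where "Z = 5 ^ n * 4 ^ (n div 8) * 3 ^ (t + 1)"
  have "real (card C) ^ 64 \<le> (2 powr (real n / 64)) ^ 64"
    using C(4) by (intro power_mono) auto
  also have "\<dots> = 2 ^ n" by (simp add: powr_power powr_realpow)
  finally have "(real (card C) * real Z) ^ 64 \<le> 2 ^ n * real Z ^ 64"
    unfolding power_mult_distrib by (rule mult_right_mono) simp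
  also have "\<dots> \<le> (8 ^ n) ^ 64"
  proof -
    have "2 ^ n * Z ^ 64 \<le> (8 ^ n) ^ 64"
      unfolding Z_def by (rule small_code_volume_arith_nat[OF assms(6,7)])
    then have "real (2 ^ n * Z ^ 64) \<le> real ((8 ^ n) ^ 64)" by (simp only: of_nat_le_iff)
    then show ?thesis by (simp only: of_nat_mult of_nat_power of_nat_numeral)
  qed
  finally have CZ: "real (card C) * real Z \<le> 8 ^ n"
    by (subst (asm) power_mono_iff) simp_all
  have "real (card {x\<in>words n. rel_dist n x C \<le> \<epsilon>}) * 4 ^ n * 3 ^ (t + 1)
      \<le> real (card C) * 5 ^ n * 4 ^ (n div 8) * 3 ^ (t + 1)"
    using card_close_to_code_le[OF C(1-3) assms(5)] assms(7) by (intro mult_right_mono) auto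
  also have "\<dots> = real (card C) * real Z" by (simp add: Z_def)
  also have "\<dots> \<le> 2 ^ n * 4 ^ n"
    using CZ by (simp flip: power_mult_distrib)
  finally show ?thesis by simp
qed

lemma card_accepted_le_of_equal_averages:
  fixes p :: "'a \<Rightarrow> real"
  assumes fin: "finite V" "finite W" "W \<noteq> {}" and "A \<subseteq> V" "N \<subseteq> W"
    and p: "\<And>x. 0 \<le> p x" "\<And>x. p x \<le> 1"
    and avg: "(\<Sum>c\<in>V. p c ^ r) * real (card W) = (\<Sum>x\<in>W. p x ^ r) * real (card V)"
    and acc: "\<And>c. c \<in> A \<Longrightarrow> 2/3 \<le> p c"
    and rej: "\<And>x. x \<in> W - N \<Longrightarrow> p x \<le> 1/3"
    and N: "real (card N) * 3 ^ r \<le> real (card W)"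
  shows "real (card A) * 2 ^ r \<le> 2 * real (card V)"
proof -
  have "real (card A) * (2/3) ^ r \<le> (\<Sum>c\<in>A. p c ^ r)"
    using acc sum_mono[of A "\<lambda>_. (2/3) ^ r" "\<lambda>c. p c ^ r"] by (simp add: power_mono)
  also have "\<dots> \<le> (\<Sum>c\<in>V. p c ^ r)"
    using assms(4) fin(1) p(1) by (intro sum_mono2) auto
  finally have lower: "real (card A) * 2 ^ r \<le> 3 ^ r * (\<Sum>c\<in>V. p c ^ r)"
    by (simp add: field_simps)
  have "(\<Sum>x\<in>W. p x ^ r) = (\<Sum>x\<in>W - N. p x ^ r) + (\<Sum>x\<in>N. p x ^ r)"
    by (rule sum.subset_diff[OF assms(5) fin(2)])
  also have "\<dots> \<le> (\<Sum>x\<in>W - N. (1/3) ^ r) + (\<Sum>x\<in>N. 1)"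
    using rej p by (intro add_mono sum_mono power_mono power_le_one) auto
  also have "\<dots> \<le> real (card W) * (1/3) ^ r + real (card N)"
    using fin(2) by (simp add: card_Diff_subset[OF finite_subset[OF assms(5)] assms(5)]
        card_mono[OF fin(2) assms(5)])
  finally have upper: "3 ^ r * (\<Sum>x\<in>W. p x ^ r) \<le> 2 * real (card W)"
    using N by (simp add: field_simps)
  have "real (card A) * 2 ^ r * real (card W) \<le> 3 ^ r * (\<Sum>x\<in>W. p x ^ r) * real (card V)"
    using mult_right_mono[OF lower, of "real (card W)"] avg by (simp add: mult.assoc)
  also have "\<dots> \<le> 2 * real (card W) * real (card V)"
    using upper by (rule mult_right_mono) simp
  finally show ?thesis using fin by (simp add: card_gt_0_iff mult.commute[of _ "real (card W)"])
qed

lemma dual_distance_le_length: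
  assumes "is_dual_distance n C \<Gamma>"
  shows "\<Gamma> \<le> n"
proof -
  obtain y where "y \<in> dual_code n C" "hamming_weight y = \<Gamma>"
    using assms by (auto simp: is_dual_distance_def)
  moreover have "hamming_weight y \<le> length y"
    unfolding hamming_weight_def by (rule order.trans[OF card_mono[of "{..<length y}"]]) auto
  ultimately show ?thesis by (auto simp: dual_code_def words_def)
qed

lemma partially_testable_card_le:
  assumes lin: "linear_code n C" and dd: "is_dual_distance n C \<Gamma>"
    and small: "real (card C) \<le> 2 powr (real n / 64)" and "\<epsilon> < 1/8"
    and "C' \<subseteq> C" and "partially_testable n C C' q \<epsilon>"
    and "0 < q" "1 \<le> t" "32 * t * q \<le> \<Gamma>"
  shows "real (card C') * 2 ^ t \<le> real (card C)"
proof -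
  have Cw: "C \<subseteq> words n" and "C \<noteq> {}" using lin by (auto simp: linear_code_def)
  have finC: "finite C" using Cw finite_words finite_subset by blast
  obtain T where T: "\<forall>t\<in>set_pmf T. depth t \<le> q \<and> queries_in n t"
    and acc: "\<forall>x\<in>C'. measure_pmf.prob T {t. run t x} \<ge> 2/3"
    and rej: "\<forall>x\<in>words n. rel_dist n x C > \<epsilon> \<longrightarrow> measure_pmf.prob T {t. \<not> run t x} \<ge> 2/3"
    using assms(6) unfolding partially_testable_def by blast
  define p where "p x = measure_pmf.prob T {t. run t x}" for x
  define N where "N = {x\<in>words n. rel_dist n x C \<le> \<epsilon>}"
  have "1 \<le> t * q" "t \<le> t * q" "q \<le> t * q" "32 * t * q = 32 * (t * q)"
    "(t + 1) * q = t * q + q"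
    using assms(7,8) by simp_all
  then have "(t + 1) * q \<le> \<Gamma> - 1" "32 * t \<le> n" "8 \<le> n"
    using assms(8,9) dual_distance_le_length[OF dd] by linarith+
  have amplified: "queries_in n s \<and> depth s \<le> \<Gamma> - 1"
    if "s \<in> set_pmf (amplify T (t + 1))" for s
    using set_pmf_amplify[of T n q, OF _ that] T \<open>(t + 1) * q \<le> \<Gamma> - 1\<close> by fastforce
  have avg: "(\<Sum>c\<in>C. p c ^ (t + 1)) * real (card (words n)) =
      (\<Sum>x\<in>words n. p x ^ (t + 1)) * real (card C)"
    using sum_accept_prob_k_wise_uniform[where M="amplify T (t + 1)",
        OF finC linear_code_k_wise_uniform[OF lin dd] finite_words words_k_wise_uniform amplified]
    by (simp only: prob_accept_amplify p_def)
  have far: "p x \<le> 1/3" if "x \<in> words n - N" for x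
  proof -
    have "measure_pmf.prob T {t. \<not> run t x} = 1 - p x"
      using measure_pmf.prob_compl[of "{t. run t x}" T]
      by (simp add: p_def flip: Compl_eq_Diff_UNIV Collect_neg_eq)
    moreover have "x \<in> words n" "\<epsilon> < rel_dist n x C" using that by (auto simp: N_def)
    ultimately show ?thesis using rej by fastforce
  qed
  have "real (card N) * 3 ^ (t + 1) \<le> real (card (words n))"
    unfolding N_def card_words
    using card_close_to_small_code_le[OF finC Cw \<open>C \<noteq> {}\<close> small assms(4)] \<open>32 * t \<le> n\<close> \<open>8 \<le> n\<close>
    by simp
  moreover have "words n \<noteq> {}" by (auto simp: words_def intro: exI[of _ "replicate n False"])
  ultimately have "real (card C') * 2 ^ (t + 1) \<le> 2 * real (card C)"
    using acc
    by (intro card_accepted_le_of_equal_averages[OF finC finite_words _ assms(5) _ _ _ avg _ far])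
       (auto simp: p_def N_def)
  then show ?thesis by simp
qed

lemma shannon_entropy_pmf_of_set:
  assumes "finite A" "A \<noteq> {}"
  shows "shannon_entropy (pmf_of_set A) = log 2 (real (card A))"
proof -
  have "real (card A) > 0" using assms by (simp add: card_gt_0_iff)
  then show ?thesis
    using assms by (simp add: shannon_entropy_def log_divide)
qed

theorem lemma15:
  fixes n q \<Gamma> :: nat and C C' :: "bool list set" and \<epsilon> :: real
  assumes "linear_code n C"
    and "is_dual_distance n C \<Gamma>"
    and "real (card C) \<le> 2 powr (real n / 64)"
    and "\<epsilon> < 1/8"
    and "C' \<subseteq> C" and "C' \<noteq> {}"
    and "partially_testable n C C' q \<epsilon>"
  shows "shannon_entropy (pmf_of_set C') \<le>
           log 2 (real (card C)) - real_of_int \<lfloor>(real \<Gamma> / 32) / real q\<rfloor>"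
proof -
  have finC: "finite C" using assms(1) finite_words finite_subset by (auto simp: linear_code_def)
  have finC': "finite C'" using finite_subset[OF assms(5) finC] .
  define t where "t = nat \<lfloor>(real \<Gamma> / 32) / real q\<rfloor>"
  have t: "real_of_int \<lfloor>(real \<Gamma> / 32) / real q\<rfloor> = real t" by (simp add: t_def)
  have "real (card C') * 2 ^ t \<le> real (card C)"
  proof (cases "t = 0")
    case True
    then show ?thesis using card_mono[OF finC assms(5)] by simp
  next
    case False
    then have "0 < q" by (cases "q = 0") (auto simp: t_def)
    moreover have "real t \<le> (real \<Gamma> / 32) / real q" using t by linarith
    then have "real (32 * t * q) \<le> real \<Gamma>" using \<open>0 < q\<close> by (simp add: field_simps)
    then have "32 * t * q \<le> \<Gamma>" by (simp only: of_nat_le_iff)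
    ultimately show ?thesis
      using partially_testable_card_le[OF assms(1-5,7)] False by simp
  qed
  moreover have "0 < real (card C')" using finC' assms(6) by (simp add: card_gt_0_iff)
  ultimately have "log 2 (real (card C') * 2 ^ t) \<le> log 2 (real (card C))"
    by (intro log_mono) auto
  then show ?thesis using shannon_entropy_pmf_of_set[OF finC' assms(6)] t \<open>0 < real (card C')\<close>
    by (simp add: log_mult log_nat_power)
qed

end
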